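(* Let $\gamma_0,\gamma_1,\gamma_2,\gamma_3$ be $4\times4$ Dirac matrices, let $m$ be a constant, and define the $4\times 4$ matrices \[ J_1=\tfrac12\gamma_0,\quad J_2=\tfrac{i}{2}\gamma_3,\quad J_3=\tfrac{i}{2}\gamma_3\gamma_0 . \] Let $V(x)$ be a smooth function satisfying, for some fixed $N\in\mathbf{N}$ and constants $C_0,\ldots,C_N$ not all zero, the higher stationary mKdV equation \[ \sum_{k=0}^{N} C_k S_k=0,\qquad S_k=\mathcal{Y}^k V', \] where $\mathcal{Y}=D_x^2+V^2+V_xD_x^{-1}V$, $D_x=\frac{d}{dx}$, and $D_x^{-1}$ denotes the inverse of $D_x$ (integration in $x$). Then the system of ODEs \[ \big(D_x-V(x)J_3-mJ_2\big)\varphi=0 \] for a four-component complex-valued function $\varphi(x)$ is integrable by quadratures.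
   Context: Dirac matrices are $4\times4$ matrices satisfying $\gamma_\mu\gamma_\nu+\gamma_\nu\gamma_\mu=2g_{\mu\nu}I$ with $g=\mathrm{diag}(1,-1,-1,-1)$. In the operator $\mathcal{Y}=D_x^2+V^2+V_xD_x^{-1}V$, the term $V_xD_x^{-1}V$ acts on a function $u$ as $V_x\cdot D_x^{-1}(Vu)$; $\mathcal{Y}$ is the recursion operator of the mKdV equation $V_t+V_{xxx}+\tfrac32V^2V_x=0$, and $S_k=\mathcal{Y}^kV'$ are its higher symmetries; for $N=1$ the equation reduces to $C_1(V'''+\tfrac32V^2V')+C_0'V'=0$ type stationary mKdV. "Integrable by quadratures" means that the general solution can be obtained by a finite sequence of algebraic operations, integrations of known functions, and compositions/exponentiations of known functions. *)

theory Defs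
  imports "HOL-Analysis.Analysis"
begin

definition minkowski :: "nat \<Rightarrow> nat \<Rightarrow> complex" where
  "minkowski \<mu> \<nu> = (if \<mu> = \<nu> then (if \<mu> = 0 then 1 else -1) else 0)"

definition dirac_matrices :: "(nat \<Rightarrow> complex^4^4) \<Rightarrow> bool" where
  "dirac_matrices \<gamma> \<longleftrightarrow>
     (\<forall>\<mu><4. \<forall>\<nu><4. \<gamma> \<mu> ** \<gamma> \<nu> + \<gamma> \<nu> ** \<gamma> \<mu> = mat (2 * minkowski \<mu> \<nu>))"

definition J1 :: "(nat \<Rightarrow> complex^4^4) \<Rightarrow> complex^4^4" where
  "J1 \<gamma> = mat (1/2) ** \<gamma> 0"
definition J2 :: "(nat \<Rightarrow> complex^4^4) \<Rightarrow> complex^4^4" where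
  "J2 \<gamma> = mat (\<i>/2) ** \<gamma> 3"
definition J3 :: "(nat \<Rightarrow> complex^4^4) \<Rightarrow> complex^4^4" where
  "J3 \<gamma> = mat (\<i>/2) ** \<gamma> 3 ** \<gamma> 0"

text \<open>Higher symmetries S_k = Y^k V' of mKdV, where Y = D^2 + V^2 + V_x D^{-1} V.
  D^{-1} is integration, determined up to an additive constant; at each step some
  antiderivative W_k of V*S_k is chosen:
  S_0 = V',  S_{k+1} = S_k'' + V^2 S_k + V' W_k  with  W_k' = V S_k.\<close>
definition mkdv_symmetries :: "(real \<Rightarrow> real) \<Rightarrow> (nat \<Rightarrow> real \<Rightarrow> real) \<Rightarrow> bool" where
  "mkdv_symmetries V S \<longleftrightarrow>
     S 0 = deriv V \<and>
     (\<forall>k. \<exists>W. (\<forall>x. (W has_real_derivative (V x * S k x)) (at x)) \<and>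
              S (Suc k) = (\<lambda>x. deriv (deriv (S k)) x + (V x)^2 * S k x + deriv V x * W x))"

text \<open>Functions obtainable by quadratures on the set I from the known data:
  complex constants, the variable x, the potential V; closed under field operations,
  differentiation, integration, exponentiation, and (continuous branches of) algebraic
  functions over the class.\<close>
inductive quad :: "(real \<Rightarrow> real) \<Rightarrow> real set \<Rightarrow> (real \<Rightarrow> complex) \<Rightarrow> bool"
  for V :: "real \<Rightarrow> real" and I :: "real set" where
  q_const: "quad V I (\<lambda>x. c)"
| q_var: "quad V I (\<lambda>x. complex_of_real x)"
| q_V: "quad V I (\<lambda>x. complex_of_real (V x))"
| q_cong: "quad V I f \<Longrightarrow> (\<forall>x\<in>I. g x = f x) \<Longrightarrow> quad V I g"
| q_add: "quad V I f \<Longrightarrow> quad V I g \<Longrightarrow> quad V I (\<lambda>x. f x + g x)"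
| q_mult: "quad V I f \<Longrightarrow> quad V I g \<Longrightarrow> quad V I (\<lambda>x. f x * g x)"
| q_inv: "quad V I f \<Longrightarrow> (\<forall>x\<in>I. f x \<noteq> 0) \<Longrightarrow> quad V I (\<lambda>x. inverse (f x))"
| q_deriv: "quad V I f \<Longrightarrow> (\<forall>x\<in>I. (f has_vector_derivative g x) (at x)) \<Longrightarrow> quad V I g"
| q_integral: "quad V I f \<Longrightarrow> (\<forall>x\<in>I. (g has_vector_derivative f x) (at x)) \<Longrightarrow> quad V I g"
| q_exp: "quad V I f \<Longrightarrow> quad V I (\<lambda>x. exp (f x))"
| q_alg: "(\<forall>k<length cs. quad V I (cs ! k)) \<Longrightarrow> length cs \<ge> 2 \<Longrightarrow>
          (\<forall>x\<in>I. last cs x \<noteq> 0) \<Longrightarrow> continuous_on I g \<Longrightarrow>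
          (\<forall>x\<in>I. (\<Sum>k<length cs. (cs ! k) x * g x ^ k) = 0) \<Longrightarrow> quad V I g"

definition integrable_by_quadratures ::
    "(real \<Rightarrow> real) \<Rightarrow> (real \<Rightarrow> complex^4^4) \<Rightarrow> bool" where
  "integrable_by_quadratures V A \<longleftrightarrow>
     (\<forall>a b. a < b \<longrightarrow> (\<exists>c d. a \<le> c \<and> c < d \<and> d \<le> b \<and>
        (\<exists>\<Phi> :: real \<Rightarrow> complex^4^4.
           (\<forall>i j. quad V {c<..<d} (\<lambda>x. \<Phi> x $ i $ j)) \<and>
           (\<forall>x\<in>{c<..<d}. (\<Phi> has_vector_derivative (A x ** \<Phi> x)) (at x) \<and> det (\<Phi> x) \<noteq> 0))))"

end

theory Submission
  imports Defs
begin

text \<open>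
  The coefficient \<open>A = V J\<^sub>3 + m J\<^sub>2\<close> lies in the split-quaternion subalgebra spanned by
  1, \<open>\<gamma>\<^sub>0\<close>, \<open>\<gamma>\<^sub>3\<close>, \<open>\<gamma>\<^sub>3\<gamma>\<^sub>0\<close>. Seeking the fundamental matrix in that subalgebra reduces
  the system to the 2\<times>2 system \<open>u' = \<onehalf>[[m, V], [-V, -m]] u\<close>: two of its solutions with
  nonzero Wronskian give a fundamental matrix, and from one solution with \<open>u\<^sub>1 \<noteq> 0\<close> a
  second is obtained by one quadrature (reduction of order).

  For \<open>m = 0\<close> or constant \<open>V\<close> the reduced system is \<open>f(x) B\<close> with a constant matrix \<open>B\<close>
  and is solved by \<open>exp (\<Theta> B)\<close>, \<open>\<Theta>' = f\<close>. Otherwise divide \<open>\<Sum> C\<^sub>k X\<^sup>k\<close> by \<open>X - m\<^sup>2\<close>: the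
  quotient applied to the symmetries gives a function \<open>p\<close>, and one integration more gives
  functions \<open>q, r\<close>, all known by quadratures, such that \<open>L = [[q, p + r], [p - r, -q]]\<close> solves
  the Lax equation \<open>L' = [A, L]\<close> of the reduced system. An eigenvector of \<open>L\<close>, normalised by
  \<open>exp \<integral>g\<close>, is then a solution. Where \<open>p + r\<close> vanishes identically, either \<open>V = 0\<close> or
  \<open>p = 0\<close>, which is a stationary relation of lower order, and induction on \<open>N\<close> applies.
\<close>


lemma antiderivative_on_open_interval:
  fixes f :: "real \<Rightarrow> 'a::euclidean_space"
  assumes "continuous_on {a<..<b} f"
  obtains F where "\<And>x. x \<in> {a<..<b} \<Longrightarrow> (F has_vector_derivative f x) (at x)"
proof (cases "a < b")
  case True
  have "isCont f x" if "a < x" "x < b" for x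
    using assms that by (simp add: continuous_on_eq_continuous_at)
  then have "\<exists>F. \<forall>x. ereal a < ereal x \<longrightarrow> ereal x < ereal b \<longrightarrow>
      (F has_vector_derivative f x) (at x)"
    using True by (intro einterval_antiderivative) simp_all
  then show ?thesis
    using that by auto
qed (use that in auto)

lemma continuous_nonzero_subinterval:
  fixes f :: "real \<Rightarrow> 'a::real_normed_vector"
  assumes "continuous_on {a<..<b} f" "x0 \<in> {a<..<b}" "f x0 \<noteq> 0"
  obtains c d where "a \<le> c" "c < d" "d \<le> b" "\<forall>x\<in>{c<..<d}. f x \<noteq> 0"
proof -
  have "open (f -` (- {0}) \<inter> {a<..<b})"
    using assms(1) by (simp add: continuous_on_open_vimage open_Compl)
  moreover have "x0 \<in> f -` (- {0}) \<inter> {a<..<b}"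
    using assms(2,3) by simp
  ultimately obtain e where "e > 0" and e: "ball x0 e \<subseteq> f -` (- {0}) \<inter> {a<..<b}"
    by (rule openE)
  show thesis
  proof (rule that)
    show "a \<le> max a (x0 - e)" "min b (x0 + e) \<le> b" by simp_all
    show "max a (x0 - e) < min b (x0 + e)" using \<open>e > 0\<close> assms(2) by simp
    show "\<forall>x\<in>{max a (x0 - e)<..<min b (x0 + e)}. f x \<noteq> 0"
    proof
      fix x assume "x \<in> {max a (x0 - e)<..<min b (x0 + e)}"
      then have "x \<in> ball x0 e" by (simp add: ball_eq_greaterThanLessThan)
      from subsetD[OF e this] show "f x \<noteq> 0" by simp
    qed
  qed
qed

lemma has_real_derivative_vanishing:
  fixes f :: "real \<Rightarrow> real"
  assumes "(f has_real_derivative D) (at x)" "open S" "x \<in> S" "\<And>y. y \<in> S \<Longrightarrow> f y = 0"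
  shows "D = 0"
proof -
  have "((\<lambda>y. 0) has_real_derivative D) (at x)"
    using has_field_derivative_transform_within_open[OF assms(1-3)] assms(4) by auto
  then show ?thesis
    using DERIV_const DERIV_unique by blast
qed

lemma has_vector_derivative_exp:
  fixes g :: "real \<Rightarrow> 'a::{real_normed_field,banach}"
  assumes "(g has_vector_derivative g') (at x)"
  shows "((\<lambda>x. exp (g x)) has_vector_derivative g' * exp (g x)) (at x)"
  using field_vector_diff_chain_at[OF assms DERIV_exp] by (simp add: o_def)

lemma has_vector_derivative_inverse:
  fixes g :: "real \<Rightarrow> 'a::real_normed_field"
  assumes "(g has_vector_derivative g') (at x)" "g x \<noteq> 0"
  shows "((\<lambda>x. inverse (g x)) has_vector_derivative - g' / (g x * g x)) (at x)"
  using field_vector_diff_chain_at[OF assms(1) DERIV_inverse[OF assms(2)]] assms(2)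
  by (simp add: o_def field_simps power2_eq_square)

fun differentiable_upto :: "nat \<Rightarrow> (real \<Rightarrow> real) \<Rightarrow> bool" where
  "differentiable_upto 0 f \<longleftrightarrow> (\<forall>x. f differentiable (at x))"
| "differentiable_upto (Suc n) f \<longleftrightarrow> (\<forall>x. f differentiable (at x)) \<and> differentiable_upto n (deriv f)"

definition smooth :: "(real \<Rightarrow> real) \<Rightarrow> bool" where
  "smooth f \<longleftrightarrow> (\<forall>n. differentiable_upto n f)"

lemma differentiable_upto_differentiable: "differentiable_upto n f \<Longrightarrow> f differentiable (at x)"
  by (cases n) simp_all

lemma differentiable_upto_Suc_imp: "differentiable_upto (Suc n) f \<Longrightarrow> differentiable_upto n f"
  by (induction n arbitrary: f) simp_all

lemma real_differentiable_imp_field_differentiable: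
  "f differentiable (at x) \<Longrightarrow> f field_differentiable (at x)"
  for f :: "real \<Rightarrow> real"
  by (simp add: field_differentiable_def real_differentiable_def)

lemma differentiable_upto_add:
  "differentiable_upto n f \<Longrightarrow> differentiable_upto n g \<Longrightarrow> differentiable_upto n (\<lambda>x. f x + g x)"
proof (induction n arbitrary: f g)
  case (Suc n)
  then have "deriv (\<lambda>x. f x + g x) = (\<lambda>x. deriv f x + deriv g x)"
    by (simp add: fun_eq_iff real_differentiable_imp_field_differentiable)
  with Suc show ?case by simp
qed simp

lemma differentiable_upto_mult:
  "differentiable_upto n f \<Longrightarrow> differentiable_upto n g \<Longrightarrow> differentiable_upto n (\<lambda>x. f x * g x)"
proof (induction n arbitrary: f g)
  case (Suc n)
  then have "deriv (\<lambda>x. f x * g x) = (\<lambda>x. f x * deriv g x + deriv f x * g x)"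
    by (simp add: fun_eq_iff real_differentiable_imp_field_differentiable)
  moreover have "differentiable_upto n (\<lambda>x. f x * deriv g x + deriv f x * g x)"
    using Suc by (intro differentiable_upto_add Suc.IH) (simp_all add: differentiable_upto_Suc_imp)
  ultimately show ?case
    using Suc.prems by simp
qed simp

lemma smooth_if_deriv_funpow_differentiable:
  assumes "\<forall>k x. (deriv ^^ k) f differentiable (at x)"
  shows "smooth f"
  unfolding smooth_def
proof
  fix n show "differentiable_upto n f"
    using assms
  proof (induction n arbitrary: f)
    case (Suc n)
    have "\<forall>k x. (deriv ^^ k) (deriv f) differentiable (at x)"
      using Suc.prems by (metis comp_apply funpow_Suc_right)
    with Suc show ?case
      by (metis differentiable_upto.simps(2) funpow_0)
  qed (metis differentiable_upto.simps(1) funpow_0)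
qed

lemma smooth_differentiable: "smooth f \<Longrightarrow> f differentiable (at x)"
  unfolding smooth_def using differentiable_upto_differentiable by blast

lemma smooth_deriv: "smooth f \<Longrightarrow> smooth (deriv f)"
  unfolding smooth_def using differentiable_upto.simps(2) by blast

lemma smooth_add: "smooth f \<Longrightarrow> smooth g \<Longrightarrow> smooth (\<lambda>x. f x + g x)"
  unfolding smooth_def by (blast intro: differentiable_upto_add)

lemma smooth_mult: "smooth f \<Longrightarrow> smooth g \<Longrightarrow> smooth (\<lambda>x. f x * g x)"
  unfolding smooth_def by (blast intro: differentiable_upto_mult)

lemma smooth_antiderivative:
  assumes "\<And>x. (F has_real_derivative f x) (at x)" "smooth f"
  shows "smooth F"
proof -
  have "deriv F = f" "\<And>x. F differentiable (at x)"
    using assms(1) by (auto simp: fun_eq_iff DERIV_imp_deriv real_differentiable_def)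
  then show ?thesis
    using assms(2) unfolding smooth_def by (metis differentiable_upto.simps not0_implies_Suc)
qed

lemma quad_cmult: "quad V J f \<Longrightarrow> quad V J (\<lambda>x. c * f x)"
  by (intro q_mult q_const)

lemma quad_diff: "quad V J f \<Longrightarrow> quad V J g \<Longrightarrow> quad V J (\<lambda>x. f x - g x)"
  by (rule q_cong[where f="\<lambda>x. f x + (-1) * g x"], intro q_add quad_cmult) simp_all

lemma quad_divide_const: "quad V J f \<Longrightarrow> quad V J (\<lambda>x. f x / c)"
  by (rule q_cong[where f="\<lambda>x. inverse c * f x"], rule quad_cmult) (simp_all add: field_simps)

lemma quad_sum:
  "finite A \<Longrightarrow> (\<And>i. i \<in> A \<Longrightarrow> quad V J (f i)) \<Longrightarrow> quad V J (\<lambda>x. \<Sum>i\<in>A. f i x)"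
  by (induction A rule: finite_induct) (auto intro: q_add q_const)

lemma quad_of_real_deriv:
  assumes "quad V J (\<lambda>x. of_real (f x))" "\<And>x. f differentiable (at x)"
  shows "quad V J (\<lambda>x. of_real (deriv f x))"
proof (rule q_deriv[OF assms(1)], intro ballI)
  fix x
  show "((\<lambda>x. of_real (f x)) has_vector_derivative of_real (deriv f x)) (at x)"
    using assms(2) by (intro has_vector_derivative_of_real) (simp add: DERIV_deriv_iff_real_differentiable)
qed

lemma quad_of_real_weighted_sum:
  fixes N :: nat
  assumes "\<And>j. j \<le> N \<Longrightarrow> quad V K (\<lambda>x. of_real (F j x))"
  shows "quad V K (\<lambda>x. of_real (\<Sum>j\<le>N. D j * F j x))"
proof (rule q_cong)
  show "quad V K (\<lambda>x. \<Sum>j\<le>N. of_real (D j) * of_real (F j x))"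
    using assms by (intro quad_sum quad_cmult) auto
qed simp

definition quad_fundamental_matrix ::
    "(real \<Rightarrow> real) \<Rightarrow> (real \<Rightarrow> complex^4^4) \<Rightarrow> real set \<Rightarrow> bool" where
  "quad_fundamental_matrix V A J \<longleftrightarrow>
     (\<exists>\<Phi>. (\<forall>i j. quad V J (\<lambda>x. \<Phi> x $ i $ j)) \<and>
          (\<forall>x\<in>J. (\<Phi> has_vector_derivative A x ** \<Phi> x) (at x) \<and> det (\<Phi> x) \<noteq> 0))"

definition quad_solvable_within ::
    "(real \<Rightarrow> real) \<Rightarrow> (real \<Rightarrow> complex^4^4) \<Rightarrow> real \<Rightarrow> real \<Rightarrow> bool" where
  "quad_solvable_within V A a b \<longleftrightarrow>
     (\<exists>c d. a \<le> c \<and> c < d \<and> d \<le> b \<and> quad_fundamental_matrix V A {c<..<d})"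

lemma integrable_by_quadratures_iff_solvable_within:
  "integrable_by_quadratures V A \<longleftrightarrow> (\<forall>a b. a < b \<longrightarrow> quad_solvable_within V A a b)"
  unfolding integrable_by_quadratures_def quad_solvable_within_def quad_fundamental_matrix_def ..

lemma quad_solvable_withinI:
  "a < b \<Longrightarrow> quad_fundamental_matrix V A {a<..<b} \<Longrightarrow> quad_solvable_within V A a b"
  unfolding quad_solvable_within_def by blast

lemma quad_solvable_within_subinterval:
  "a \<le> c \<Longrightarrow> d \<le> b \<Longrightarrow> quad_solvable_within V A c d \<Longrightarrow> quad_solvable_within V A a b"
  unfolding quad_solvable_within_def by (meson order_trans)

section \<open>Dirac matrices and split quaternions\<close>

lemma mat_mult_entry:
  "(mat a ** X) $ i $ j = a * (X $ i $ j :: 'a::comm_semiring_1)"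
  unfolding matrix_matrix_mult_def mat_def
  by (simp add: if_distrib if_distribR cong: if_cong)

lemma matrix_mult_mat_entry:
  "(X ** mat b) $ i $ j = (X $ i $ j :: 'a::comm_semiring_1) * b"
  unfolding matrix_matrix_mult_def mat_def
  by (simp add: if_distrib if_distribR cong: if_cong)

lemma mat_mult_mat: "mat a ** mat b = (mat (a * b) :: 'a::comm_semiring_1^'n^'n)"
  unfolding vec_eq_iff mat_mult_entry by (simp add: mat_def)

lemma mat_mult_left_commute:
  "mat a ** (mat b ** X) = mat (a * b) ** (X :: 'a::comm_semiring_1^'n^'m)"
  by (simp add: vec_eq_iff mat_mult_entry mult.assoc)

lemma matrix_mult_entry: "(A ** B) $ i $ j = (\<Sum>k\<in>UNIV. A $ i $ k * B $ k $ j)"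
  by (simp add: matrix_matrix_mult_def)

lemma matrix_mul_mat_commute:
  "X ** (mat b ** Y) = mat b ** (X ** Y :: 'a::comm_semiring_1^'n^'m)"
  unfolding vec_eq_iff
  by (simp only: matrix_mult_entry[of X] mat_mult_entry sum_distrib_left mult_ac, simp)

lemma mat_mult_mult_mat:
  "(mat a ** X) ** mat b = mat (a * b) ** (X :: 'a::comm_semiring_1^'n^'n)"
  by (simp add: vec_eq_iff mat_mult_entry matrix_mult_mat_entry flip: matrix_mul_assoc)
    (simp add: mult_ac)

lemma mat_mult_mult_mat_mult:
  "(mat a ** X) ** (mat b ** Y) = mat (a * b) ** (X ** Y :: 'a::comm_semiring_1^'n^'m)"
  by (simp only: matrix_mul_assoc[symmetric] matrix_mul_mat_commute[of X] mat_mult_left_commute)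

lemma matrix_add_rdistrib: "(B + C) ** A = B ** A + C ** (A :: 'a::semiring_1^'n^'m)"
  by (simp add: vec_eq_iff matrix_matrix_mult_def sum.distrib[symmetric] algebra_simps)

lemma scaleR_eq_mat_mult: "r *\<^sub>R X = mat (complex_of_real r) ** (X :: complex^'n^'m)"
  unfolding vec_eq_iff mat_mult_entry vector_scaleR_component by (simp add: scaleR_conv_of_real)

lemma dirac_matrices_relations:
  assumes "dirac_matrices \<gamma>"
  shows "\<gamma> 0 ** \<gamma> 0 = mat 1" "\<gamma> 3 ** \<gamma> 3 = mat (-1)"
    and "\<gamma> 0 ** \<gamma> 3 = mat (-1) ** (\<gamma> 3 ** \<gamma> 0)"
proof -
  have anticomm: "\<gamma> \<mu> ** \<gamma> \<nu> + \<gamma> \<nu> ** \<gamma> \<mu> = mat (2 * minkowski \<mu> \<nu>)"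
    if "\<mu> < 4" "\<nu> < 4" for \<mu> \<nu>
    using assms that unfolding dirac_matrices_def by blast
  have half: "X = mat c" if "X + X = mat (2 * c)" for X :: "complex^4^4" and c
  proof -
    have "2 * X $ i $ j = 2 * mat c $ i $ j" for i j
      using that by (simp add: vec_eq_iff mat_def)
    then show ?thesis by (simp add: vec_eq_iff)
  qed
  show "\<gamma> 0 ** \<gamma> 0 = mat 1" "\<gamma> 3 ** \<gamma> 3 = mat (-1)"
    using anticomm[of 0 0] anticomm[of 3 3] by (auto intro: half simp: minkowski_def)
  show "\<gamma> 0 ** \<gamma> 3 = mat (-1) ** (\<gamma> 3 ** \<gamma> 0)"
    using anticomm[of 0 3]
    by (simp add: minkowski_def vec_eq_iff mat_mult_entry eq_neg_iff_add_eq_0)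
qed

lemma dirac_products:
  assumes "dirac_matrices \<gamma>"
  defines "e1 \<equiv> \<gamma> 0" and "e2 \<equiv> \<gamma> 3" and "e3 \<equiv> \<gamma> 3 ** \<gamma> 0"
  shows "e1 ** e1 = mat 1" "e2 ** e2 = mat (-1)" "e3 ** e3 = mat 1"
    and "e1 ** e2 = mat (-1) ** e3" "e1 ** e3 = mat (-1) ** e2" "e3 ** e1 = e2"
    and "e2 ** e3 = mat (-1) ** e1" "e3 ** e2 = e1"
proof -
  have e3: "e3 = e2 ** e1"
    by (simp only: e1_def e2_def e3_def)
  show e11: "e1 ** e1 = mat 1" and e22: "e2 ** e2 = mat (-1)" and e12: "e1 ** e2 = mat (-1) ** e3"
    using dirac_matrices_relations[OF assms(1)] by (simp_all only: e1_def e2_def e3_def)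
  show "e1 ** e3 = mat (-1) ** e2"
    by (simp only: e3 matrix_mul_assoc e12, simp only: e11 matrix_mul_rid flip: matrix_mul_assoc)
  show e31: "e3 ** e1 = e2"
    by (simp only: e3 e11 matrix_mul_rid flip: matrix_mul_assoc)
  show e23: "e2 ** e3 = mat (-1) ** e1"
    by (simp only: e3 e22 matrix_mul_assoc)
  have "e3 ** e2 = e2 ** (e1 ** e2)"
    by (simp only: e3 matrix_mul_assoc)
  also have "\<dots> = mat (-1) ** (e2 ** e3)"
    by (simp only: e12 matrix_mul_mat_commute)
  also have "\<dots> = e1"
    by (simp only: e23 mat_mult_left_commute) simp
  finally show e32: "e3 ** e2 = e1" .
  show "e3 ** e3 = mat 1"
    by (subst (2) e3, simp only: matrix_mul_assoc e32 e11)
qed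

text \<open>By the anticommutation relations, 1, \<open>\<gamma>\<^sub>0\<close>, \<open>\<gamma>\<^sub>3\<close> and \<open>\<gamma>\<^sub>3\<gamma>\<^sub>0\<close> span a subalgebra with
  \<open>\<gamma>\<^sub>0\<^sup>2 = 1\<close>, \<open>\<gamma>\<^sub>3\<^sup>2 = -1\<close>, \<open>(\<gamma>\<^sub>3\<gamma>\<^sub>0)\<^sup>2 = 1\<close>: a copy of the (complexified) split
  quaternions, whose norm \<open>w\<^sup>2 - x\<^sup>2 + y\<^sup>2 - z\<^sup>2\<close> is multiplicative.\<close>

definition split_quat :: "(nat \<Rightarrow> complex^4^4) \<Rightarrow> complex \<Rightarrow> complex \<Rightarrow> complex \<Rightarrow> complex \<Rightarrow> complex^4^4"
  where "split_quat \<gamma> w x y z = mat w + mat x ** \<gamma> 0 + mat y ** \<gamma> 3 + mat z ** (\<gamma> 3 ** \<gamma> 0)"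

lemma split_quat_mult:
  assumes "dirac_matrices \<gamma>"
  shows "split_quat \<gamma> w x y z ** split_quat \<gamma> w' x' y' z' =
    split_quat \<gamma> (w*w' + x*x' - y*y' + z*z') (w*x' + x*w' - y*z' + z*y')
      (w*y' + y*w' - x*z' + z*x') (w*z' + z*w' - x*y' + y*x')"
proof -
  note products = dirac_products[OF assms]
  show ?thesis
    unfolding split_quat_def
    by (simp only: matrix_add_ldistrib matrix_add_rdistrib mat_mult_mat mat_mult_left_commute
        mat_mult_mult_mat mat_mult_mult_mat_mult products,
      simp only: vec_eq_iff vector_add_component mat_mult_entry,
      simp add: mat_def algebra_simps)
qed

lemma det_split_quat_nonzero:
  assumes "dirac_matrices \<gamma>" and "w*w - x*x + y*y - z*z \<noteq> 0"
  shows "det (split_quat \<gamma> w x y z) \<noteq> 0"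
proof -
  let ?n = "w*w - x*x + y*y - z*z"
  have "split_quat \<gamma> w x y z ** split_quat \<gamma> w (-x) (-y) (-z) = mat ?n"
    unfolding split_quat_mult[OF assms(1)] by (simp add: split_quat_def algebra_simps)
  then have "split_quat \<gamma> w x y z ** (mat (1 / ?n) ** split_quat \<gamma> w (-x) (-y) (-z)) = mat 1"
    using assms(2) by (simp add: matrix_mul_mat_commute mat_mult_mat)
  then show ?thesis
    using invertible_right_inverse invertible_det_nz by blast
qed

lemma split_quat_entry:
  "split_quat \<gamma> w x y z $ i $ j =
     w * mat 1 $ i $ j + x * \<gamma> 0 $ i $ j + y * \<gamma> 3 $ i $ j + z * (\<gamma> 3 ** \<gamma> 0) $ i $ j"
  unfolding split_quat_def vector_add_component mat_mult_entry by (simp add: mat_def)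

lemma split_quat_has_vector_derivative:
  assumes "(w has_vector_derivative w') F" "(x has_vector_derivative x') F"
    and "(y has_vector_derivative y') F" "(z has_vector_derivative z') F"
  shows "((\<lambda>t. split_quat \<gamma> (w t) (x t) (y t) (z t)) has_vector_derivative
           split_quat \<gamma> w' x' y' z') F"
proof -
  have "linear (\<lambda>c. mat c ** X)" for X :: "complex^4^4"
    by (rule linearI) (simp_all only: vec_eq_iff mat_mult_entry vector_scaleR_component
        vector_add_component, simp_all add: algebra_simps scaleR_conv_of_real)
  then have scaled: "((\<lambda>t. mat (f t) ** X) has_vector_derivative mat f' ** X) F"
    if "(f has_vector_derivative f') F" for f f' and X :: "complex^4^4"
    using bounded_linear.has_vector_derivative linear_conv_bounded_linear that by blast
  show ?thesis
    using scaled[OF assms(1), of "mat 1"] scaled[OF assms(2), of "\<gamma> 0"]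
      scaled[OF assms(3), of "\<gamma> 3"] scaled[OF assms(4), of "\<gamma> 3 ** \<gamma> 0"]
    unfolding split_quat_def matrix_mul_rid by (intro has_vector_derivative_add)
qed

definition dirac_coefficient ::
    "(nat \<Rightarrow> complex^4^4) \<Rightarrow> real \<Rightarrow> (real \<Rightarrow> real) \<Rightarrow> real \<Rightarrow> complex^4^4" where "dirac_coefficient \<gamma> m V x = V x *\<^sub>R J3 \<gamma> + m *\<^sub>R J2 \<gamma>"

lemma dirac_coefficient_split_quat:
  "dirac_coefficient \<gamma> m V x = split_quat \<gamma> 0 0 (\<i> * m / 2) (\<i> * V x / 2)"
  unfolding dirac_coefficient_def J3_def J2_def split_quat_def scaleR_eq_mat_mult
  by (simp add: mat_mult_left_commute matrix_mul_assoc[symmetric] mult.commute add.commute)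

section \<open>The reduced system\<close>

definition reduced_solution ::
    "real \<Rightarrow> (real \<Rightarrow> real) \<Rightarrow> real set \<Rightarrow> (real \<Rightarrow> complex) \<Rightarrow> (real \<Rightarrow> complex) \<Rightarrow> bool" where
  "reduced_solution m V J u1 u2 \<longleftrightarrow> (\<forall>x\<in>J.
     (u1 has_vector_derivative (of_real m * u1 x + of_real (V x) * u2 x) / 2) (at x) \<and>
     (u2 has_vector_derivative - (of_real (V x) * u1 x + of_real m * u2 x) / 2) (at x))"

lemma quad_fundamental_matrix_of_reduced_solutions:
  assumes "dirac_matrices \<gamma>"
    and u: "reduced_solution m V J u1 u2" and w: "reduced_solution m V J w1 w2"
    and wronskian: "\<And>x. x \<in> J \<Longrightarrow> u1 x * w2 x - w1 x * u2 x \<noteq> 0"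
    and "quad V J u1" "quad V J u2" "quad V J w1" "quad V J w2"
  shows "quad_fundamental_matrix V (dirac_coefficient \<gamma> m V) J"
  unfolding quad_fundamental_matrix_def
proof (intro exI conjI allI ballI)
  \<comment> \<open>Under the isomorphism of the split quaternions with 2\<times>2 matrices, \<open>\<Phi>\<close> corresponds to the
    matrix with columns \<open>u\<close> and \<open>w\<close>; its norm is their Wronskian.\<close>
  define \<Phi> where "\<Phi> x = split_quat \<gamma> ((u1 x + w2 x) / 2) ((u2 x + w1 x) / 2)
    (\<i> * (u1 x - w2 x) / 2) (\<i> * (w1 x - u2 x) / 2)" for x
  show "quad V J (\<lambda>x. \<Phi> x $ i $ j)" for i j
    unfolding \<Phi>_def split_quat_entry
    by (intro q_add q_mult q_const quad_divide_const quad_diff assms(5-8))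
  fix x assume "x \<in> J"
  have "(u1 x + w2 x) / 2 * ((u1 x + w2 x) / 2) - (u2 x + w1 x) / 2 * ((u2 x + w1 x) / 2)
      + \<i> * (u1 x - w2 x) / 2 * (\<i> * (u1 x - w2 x) / 2) - \<i> * (w1 x - u2 x) / 2 * (\<i> * (w1 x - u2 x) / 2)
      = u1 x * w2 x - w1 x * u2 x"
    by (simp add: field_simps power2_eq_square[symmetric]) (simp add: algebra_simps power2_eq_square)
  then show "det (\<Phi> x) \<noteq> 0"
    unfolding \<Phi>_def using det_split_quat_nonzero[OF assms(1)] wronskian[OF \<open>x \<in> J\<close>] by metis
  let ?M = "complex_of_real m" and ?V = "complex_of_real (V x)"
  let ?du1 = "(?M * u1 x + ?V * u2 x) / 2" and ?du2 = "- (?V * u1 x + ?M * u2 x) / 2"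
  let ?dw1 = "(?M * w1 x + ?V * w2 x) / 2" and ?dw2 = "- (?V * w1 x + ?M * w2 x) / 2"
  have "(\<Phi> has_vector_derivative split_quat \<gamma> ((?du1 + ?dw2) / 2) ((?du2 + ?dw1) / 2)
      (\<i> * (?du1 - ?dw2) / 2) (\<i> * (?dw1 - ?du2) / 2)) (at x)"
    using u w \<open>x \<in> J\<close> unfolding reduced_solution_def \<Phi>_def
    by (intro split_quat_has_vector_derivative has_vector_derivative_divide
        has_vector_derivative_mult_right has_vector_derivative_add has_vector_derivative_diff)
      blast+
  also have "split_quat \<gamma> ((?du1 + ?dw2) / 2) ((?du2 + ?dw1) / 2)
      (\<i> * (?du1 - ?dw2) / 2) (\<i> * (?dw1 - ?du2) / 2) = dirac_coefficient \<gamma> m V x ** \<Phi> x"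
    unfolding \<Phi>_def dirac_coefficient_split_quat split_quat_mult[OF assms(1)]
    by (intro arg_cong4[where f="split_quat \<gamma>"]) (simp_all add: field_simps)
  finally show "(\<Phi> has_vector_derivative dirac_coefficient \<gamma> m V x ** \<Phi> x) (at x)" .
qed

lemma reduced_solution_continuous:
  assumes "reduced_solution m V J u1 u2"
  shows "continuous_on J u1" "continuous_on J u2"
  using assms unfolding reduced_solution_def
  by (auto intro!: continuous_on_vector_derivative intro: has_vector_derivative_at_within)

lemma reduced_solution_reduction_of_order:
  assumes u: "reduced_solution m V J u1 u2" and nz: "\<And>x. x \<in> J \<Longrightarrow> u1 x \<noteq> 0"
    and dU: "\<And>x. x \<in> J \<Longrightarrow>
      (U has_vector_derivative of_real (V x) * inverse (2 * (u1 x * u1 x))) (at x)"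
  shows "reduced_solution m V J (\<lambda>x. U x * u1 x) (\<lambda>x. U x * u2 x + inverse (u1 x))"
  unfolding reduced_solution_def
proof (intro ballI conjI)
  fix x assume x: "x \<in> J"
  let ?M = "complex_of_real m" and ?V = "complex_of_real (V x)"
  let ?k = "?V * inverse (2 * (u1 x * u1 x))"
  have du1: "(u1 has_vector_derivative (?M * u1 x + ?V * u2 x) / 2) (at x)"
    and du2: "(u2 has_vector_derivative - (?V * u1 x + ?M * u2 x) / 2) (at x)"
    using u x unfolding reduced_solution_def by blast+
  have "((\<lambda>x. U x * u1 x) has_vector_derivative U x * ((?M * u1 x + ?V * u2 x) / 2) + ?k * u1 x) (at x)"
    by (rule has_vector_derivative_mult[OF dU[OF x] du1])
  also have "U x * ((?M * u1 x + ?V * u2 x) / 2) + ?k * u1 x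
      = (?M * (U x * u1 x) + ?V * (U x * u2 x + inverse (u1 x))) / 2"
    using nz[OF x] by (simp add: field_simps)
  finally show "((\<lambda>x. U x * u1 x) has_vector_derivative
      (?M * (U x * u1 x) + ?V * (U x * u2 x + inverse (u1 x))) / 2) (at x)" .
  have "((\<lambda>x. U x * u2 x + inverse (u1 x)) has_vector_derivative
      U x * (- (?V * u1 x + ?M * u2 x) / 2) + ?k * u2 x
      + - ((?M * u1 x + ?V * u2 x) / 2) / (u1 x * u1 x)) (at x)"
    by (intro has_vector_derivative_add has_vector_derivative_mult[OF dU[OF x] du2]
        has_vector_derivative_inverse[OF du1 nz[OF x]])
  also have "U x * (- (?V * u1 x + ?M * u2 x) / 2) + ?k * u2 x
      + - ((?M * u1 x + ?V * u2 x) / 2) / (u1 x * u1 x)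
      = - (?V * (U x * u1 x) + ?M * (U x * u2 x + inverse (u1 x))) / 2"
    using nz[OF x] by (simp add: field_simps)
  finally show "((\<lambda>x. U x * u2 x + inverse (u1 x)) has_vector_derivative
      - (?V * (U x * u1 x) + ?M * (U x * u2 x + inverse (u1 x))) / 2) (at x)" .
qed

lemma quad_fundamental_matrix_of_reduced_solution:
  assumes "dirac_matrices \<gamma>"
    and u: "reduced_solution m V {a<..<b} u1 u2"
    and nz: "\<And>x. x \<in> {a<..<b} \<Longrightarrow> u1 x \<noteq> 0"
    and V: "continuous_on {a<..<b} V"
    and qu1: "quad V {a<..<b} u1" and qu2: "quad V {a<..<b} u2"
  shows "quad_fundamental_matrix V (dirac_coefficient \<gamma> m V) {a<..<b}"
proof -
  let ?J = "{a<..<b}" and ?k = "\<lambda>x. complex_of_real (V x) * inverse (2 * (u1 x * u1 x))"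
  have "continuous_on ?J ?k"
    using reduced_solution_continuous(1)[OF u] V nz by (intro continuous_intros) auto
  then obtain U where dU: "\<And>x. x \<in> ?J \<Longrightarrow> (U has_vector_derivative ?k x) (at x)"
    using antiderivative_on_open_interval by blast
  have "quad V ?J (\<lambda>x. 2 * (u1 x * u1 x))"
    by (intro q_mult q_const qu1)
  then have "quad V ?J (\<lambda>x. inverse (2 * (u1 x * u1 x)))"
    by (rule q_inv) (use nz in simp)
  then have "quad V ?J ?k"
    by (rule q_mult[OF q_V])
  then have qU: "quad V ?J U"
    by (rule q_integral) (use dU in blast)
  show ?thesis
  proof (rule quad_fundamental_matrix_of_reduced_solutions[OF assms(1) u
        reduced_solution_reduction_of_order[OF u nz dU] _ qu1 qu2])
    show "u1 x * (U x * u2 x + inverse (u1 x)) - U x * u1 x * u2 x \<noteq> 0" if "x \<in> ?J" for x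
      using nz[OF that] by (simp add: algebra_simps)
    show "quad V ?J (\<lambda>x. U x * u1 x)"
      by (intro q_mult qU qu1)
    show "quad V ?J (\<lambda>x. U x * u2 x + inverse (u1 x))"
      by (intro q_add q_mult q_inv qU qu1 qu2) (use nz in simp)
  qed
qed

lemma quad_cosh_sinh_pair:
  fixes \<Theta> f :: "real \<Rightarrow> complex" and \<kappa> :: complex
  assumes d\<Theta>: "\<And>x. x \<in> J \<Longrightarrow> (\<Theta> has_vector_derivative f x) (at x)" and q\<Theta>: "quad V J \<Theta>"
  obtains Ch Sh where "\<And>x. x \<in> J \<Longrightarrow> (Ch has_vector_derivative \<kappa> * f x * Sh x) (at x)"
    and "\<And>x. x \<in> J \<Longrightarrow> (Sh has_vector_derivative f x * Ch x) (at x)"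
    and "\<And>x. Ch x * Ch x - \<kappa> * (Sh x * Sh x) = 1" and "quad V J Ch" and "quad V J Sh"
proof (cases "\<kappa> = 0")
  case True
  show ?thesis
  proof (rule that[of "\<lambda>x. 1" \<Theta>])
    fix x assume "x \<in> J"
    show "((\<lambda>x. 1) has_vector_derivative \<kappa> * f x * \<Theta> x) (at x)"
      using True by simp
    show "(\<Theta> has_vector_derivative f x * 1) (at x)"
      using d\<Theta>[OF \<open>x \<in> J\<close>] by simp
  qed (use True q\<Theta> q_const in simp_all)
next
  case False
  \<comment> \<open>Ch = cosh (\<omega> \<Theta>) and Sh = sinh (\<omega> \<Theta>) / \<omega> for a square root \<omega> of \<kappa>.\<close>
  define \<omega> where "\<omega> = csqrt \<kappa>"
  have \<omega>: "\<omega> * \<omega> = \<kappa>" "\<omega> \<noteq> 0"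
    using False by (simp_all add: \<omega>_def flip: power2_eq_square)
  define E where "E x = exp (\<omega> * \<Theta> x)" for x
  define F where "F x = exp (- \<omega> * \<Theta> x)" for x
  have dE: "(E has_vector_derivative \<omega> * f x * E x) (at x)"
    and dF: "(F has_vector_derivative - \<omega> * f x * F x) (at x)" if "x \<in> J" for x
    unfolding E_def[abs_def] F_def[abs_def]
    by (intro has_vector_derivative_exp has_vector_derivative_mult_right d\<Theta> that)+
  have qE: "quad V J E" and qF: "quad V J F"
    unfolding E_def[abs_def] F_def[abs_def] by (intro q_exp quad_cmult q\<Theta>)+
  show ?thesis
  proof (rule that[of "\<lambda>x. (E x + F x) / 2" "\<lambda>x. (E x - F x) / (2 * \<omega>)"])
    fix x assume x: "x \<in> J"
    have "((\<lambda>x. (E x + F x) / 2) has_vector_derivative (\<omega> * f x * E x + - \<omega> * f x * F x) / 2) (at x)"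
      by (intro has_vector_derivative_divide has_vector_derivative_add dE dF x)
    also have "(\<omega> * f x * E x + - \<omega> * f x * F x) / 2 = \<kappa> * f x * ((E x - F x) / (2 * \<omega>))"
      using \<omega> by (simp add: field_simps flip: \<omega>(1))
    finally show "((\<lambda>x. (E x + F x) / 2) has_vector_derivative \<kappa> * f x * ((E x - F x) / (2 * \<omega>))) (at x)" .
    have "((\<lambda>x. (E x - F x) / (2 * \<omega>)) has_vector_derivative
        (\<omega> * f x * E x - - \<omega> * f x * F x) / (2 * \<omega>)) (at x)"
      by (intro has_vector_derivative_divide has_vector_derivative_diff dE dF x)
    also have "(\<omega> * f x * E x - - \<omega> * f x * F x) / (2 * \<omega>) = f x * ((E x + F x) / 2)"
      using \<omega> by (simp add: field_simps)
    finally show "((\<lambda>x. (E x - F x) / (2 * \<omega>)) has_vector_derivative f x * ((E x + F x) / 2)) (at x)" .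
  next
    fix x
    have "E x * F x = 1"
      by (simp add: E_def F_def flip: exp_add)
    then show "(E x + F x) / 2 * ((E x + F x) / 2) - \<kappa> * ((E x - F x) / (2 * \<omega>) * ((E x - F x) / (2 * \<omega>))) = 1"
      using \<omega> by (simp add: field_simps flip: \<omega>(1))
  next
    show "quad V J (\<lambda>x. (E x + F x) / 2)" "quad V J (\<lambda>x. (E x - F x) / (2 * \<omega>))"
      by (intro quad_divide_const q_add quad_diff qE qF)+
  qed
qed

lemma reduced_solutions_of_cosh_sinh:
  fixes f :: "real \<Rightarrow> real" and \<alpha> \<beta> :: real and Ch Sh :: "real \<Rightarrow> complex"
  assumes dCh: "\<And>x. x \<in> J \<Longrightarrow> (Ch has_vector_derivative
      (of_real \<alpha> * of_real \<alpha> - of_real \<beta> * of_real \<beta>) / 4 * of_real (f x) * Sh x) (at x)"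
    and dSh: "\<And>x. x \<in> J \<Longrightarrow> (Sh has_vector_derivative of_real (f x) * Ch x) (at x)"
    and m: "\<And>x. x \<in> J \<Longrightarrow> m = f x * \<alpha>" and V: "\<And>x. x \<in> J \<Longrightarrow> V x = f x * \<beta>"
  shows "reduced_solution m V J (\<lambda>x. Ch x + of_real \<alpha> / 2 * Sh x) (\<lambda>x. - of_real \<beta> / 2 * Sh x)"
    and "reduced_solution m V J (\<lambda>x. of_real \<beta> / 2 * Sh x) (\<lambda>x. Ch x - of_real \<alpha> / 2 * Sh x)"
  unfolding reduced_solution_def
proof (safe intro!: ballI)
  fix x assume x: "x \<in> J"
  let ?f = "complex_of_real (f x)" and ?a = "complex_of_real \<alpha>" and ?b = "complex_of_real \<beta>"
  have mx: "complex_of_real m = ?f * ?a" and Vx: "complex_of_real (V x) = ?f * ?b"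
    using m[OF x] V[OF x] by simp_all
  have "((\<lambda>x. Ch x + ?a / 2 * Sh x) has_vector_derivative
      (?a * ?a - ?b * ?b) / 4 * ?f * Sh x + ?a / 2 * (?f * Ch x)) (at x)"
    by (intro has_vector_derivative_add has_vector_derivative_mult_right dCh dSh x)
  also have "(?a * ?a - ?b * ?b) / 4 * ?f * Sh x + ?a / 2 * (?f * Ch x)
      = (of_real m * (Ch x + ?a / 2 * Sh x) + of_real (V x) * (- ?b / 2 * Sh x)) / 2"
    unfolding mx Vx by (simp add: field_simps)
  finally show "((\<lambda>x. Ch x + ?a / 2 * Sh x) has_vector_derivative
      (of_real m * (Ch x + ?a / 2 * Sh x) + of_real (V x) * (- ?b / 2 * Sh x)) / 2) (at x)" .
  have "((\<lambda>x. - ?b / 2 * Sh x) has_vector_derivative - ?b / 2 * (?f * Ch x)) (at x)"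
    by (intro has_vector_derivative_mult_right dSh x)
  also have "- ?b / 2 * (?f * Ch x)
      = - (of_real (V x) * (Ch x + ?a / 2 * Sh x) + of_real m * (- ?b / 2 * Sh x)) / 2"
    unfolding mx Vx by (simp add: field_simps)
  finally show "((\<lambda>x. - ?b / 2 * Sh x) has_vector_derivative
      - (of_real (V x) * (Ch x + ?a / 2 * Sh x) + of_real m * (- ?b / 2 * Sh x)) / 2) (at x)" .
  have "((\<lambda>x. ?b / 2 * Sh x) has_vector_derivative ?b / 2 * (?f * Ch x)) (at x)"
    by (intro has_vector_derivative_mult_right dSh x)
  also have "?b / 2 * (?f * Ch x)
      = (of_real m * (?b / 2 * Sh x) + of_real (V x) * (Ch x - ?a / 2 * Sh x)) / 2"
    unfolding mx Vx by (simp add: field_simps)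
  finally show "((\<lambda>x. ?b / 2 * Sh x) has_vector_derivative
      (of_real m * (?b / 2 * Sh x) + of_real (V x) * (Ch x - ?a / 2 * Sh x)) / 2) (at x)" .
  have "((\<lambda>x. Ch x - ?a / 2 * Sh x) has_vector_derivative
      (?a * ?a - ?b * ?b) / 4 * ?f * Sh x - ?a / 2 * (?f * Ch x)) (at x)"
    by (intro has_vector_derivative_diff has_vector_derivative_mult_right dCh dSh x)
  also have "(?a * ?a - ?b * ?b) / 4 * ?f * Sh x - ?a / 2 * (?f * Ch x)
      = - (of_real (V x) * (?b / 2 * Sh x) + of_real m * (Ch x - ?a / 2 * Sh x)) / 2"
    unfolding mx Vx by (simp add: field_simps)
  finally show "((\<lambda>x. Ch x - ?a / 2 * Sh x) has_vector_derivative
      - (of_real (V x) * (?b / 2 * Sh x) + of_real m * (Ch x - ?a / 2 * Sh x)) / 2) (at x)" .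
qed

lemma quad_fundamental_matrix_proportional:
  fixes \<Theta> f :: "real \<Rightarrow> real" and \<alpha> \<beta> :: real
  assumes "dirac_matrices \<gamma>"
    and d\<Theta>: "\<And>x. x \<in> J \<Longrightarrow> (\<Theta> has_real_derivative f x) (at x)"
    and q\<Theta>: "quad V J (\<lambda>x. of_real (\<Theta> x))"
    and m: "\<And>x. x \<in> J \<Longrightarrow> m = f x * \<alpha>" and V: "\<And>x. x \<in> J \<Longrightarrow> V x = f x * \<beta>"
  shows "quad_fundamental_matrix V (dirac_coefficient \<gamma> m V) J"
proof -
  let ?a = "complex_of_real \<alpha>" and ?b = "complex_of_real \<beta>"
  obtain Ch Sh where dCh: "\<And>x. x \<in> J \<Longrightarrow>
      (Ch has_vector_derivative (?a * ?a - ?b * ?b) / 4 * of_real (f x) * Sh x) (at x)"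
    and dSh: "\<And>x. x \<in> J \<Longrightarrow> (Sh has_vector_derivative of_real (f x) * Ch x) (at x)"
    and hyp: "\<And>x. Ch x * Ch x - (?a * ?a - ?b * ?b) / 4 * (Sh x * Sh x) = 1"
    and qCh: "quad V J Ch" and qSh: "quad V J Sh"
    using quad_cosh_sinh_pair[OF has_vector_derivative_of_real[OF d\<Theta>] q\<Theta>] by blast
  \<comment> \<open>The two solutions are the columns of exp (\<Theta> B) = Ch + Sh B, where A = f B for the constant
    matrix B = [[\<alpha>, \<beta>], [-\<beta>, -\<alpha>]] / 2 with B^2 = (\<alpha>^2 - \<beta>^2) / 4.\<close>
  have u: "reduced_solution m V J (\<lambda>x. Ch x + ?a / 2 * Sh x) (\<lambda>x. - ?b / 2 * Sh x)"
    using dCh dSh m V by (rule reduced_solutions_of_cosh_sinh(1))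
  have w: "reduced_solution m V J (\<lambda>x. ?b / 2 * Sh x) (\<lambda>x. Ch x - ?a / 2 * Sh x)"
    using dCh dSh m V by (rule reduced_solutions_of_cosh_sinh(2))
  show ?thesis
  proof (rule quad_fundamental_matrix_of_reduced_solutions[OF assms(1) u w])
    show "(Ch x + ?a / 2 * Sh x) * (Ch x - ?a / 2 * Sh x) - ?b / 2 * Sh x * (- ?b / 2 * Sh x) \<noteq> 0"
      for x using hyp[of x] by (simp add: field_simps)
  qed (intro q_add quad_diff quad_cmult qCh qSh)+
qed

lemma quad_fundamental_matrix_constant_potential:
  assumes "dirac_matrices \<gamma>" and "\<And>x. x \<in> J \<Longrightarrow> V x = v"
  shows "quad_fundamental_matrix V (dirac_coefficient \<gamma> m V) J"
  by (rule quad_fundamental_matrix_proportional[OF assms(1), where \<Theta>="\<lambda>x. x" and f="\<lambda>x. 1"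
        and \<alpha>=m and \<beta>=v]) (simp_all add: assms(2) q_var)

lemma quad_fundamental_matrix_massless:
  assumes "dirac_matrices \<gamma>" and "continuous_on {a<..<b} V"
  shows "quad_fundamental_matrix V (dirac_coefficient \<gamma> 0 V) {a<..<b}"
proof -
  obtain \<Theta> where "\<And>x. x \<in> {a<..<b} \<Longrightarrow> (\<Theta> has_vector_derivative V x) (at x)"
    using antiderivative_on_open_interval[OF assms(2)] by blast
  then have d\<Theta>: "\<And>x. x \<in> {a<..<b} \<Longrightarrow> (\<Theta> has_real_derivative V x) (at x)"
    by (simp add: has_real_derivative_iff_has_vector_derivative)
  have q\<Theta>: "quad V {a<..<b} (\<lambda>x. of_real (\<Theta> x))"
    by (rule q_integral[OF q_V]) (use d\<Theta> has_vector_derivative_of_real in blast)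
  show ?thesis
    using quad_fundamental_matrix_proportional[OF assms(1) d\<Theta> q\<Theta>, where m=0 and \<alpha>=0 and \<beta>=1]
    by simp
qed

section \<open>Stationary solutions of the Lax equation\<close>

lemma lax_triple_conserved:
  fixes p q r V :: "real \<Rightarrow> real"
  assumes dp: "\<And>x. x \<in> {a<..<b} \<Longrightarrow> (p has_real_derivative m * r x - V x * q x) (at x)"
    and dq: "\<And>x. x \<in> {a<..<b} \<Longrightarrow> (q has_real_derivative V x * p x) (at x)"
    and dr: "\<And>x. x \<in> {a<..<b} \<Longrightarrow> (r has_real_derivative m * p x) (at x)"
  obtains \<Delta> where "\<And>x. x \<in> {a<..<b} \<Longrightarrow> p x * p x + q x * q x - r x * r x = \<Delta>"
proof -
  have "((\<lambda>x. p x * p x + q x * q x - r x * r x) has_real_derivative 0) (at x within {a<..<b})"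
    if "x \<in> {a<..<b}" for x
  proof -
    have "((\<lambda>x. p x * p x + q x * q x - r x * r x) has_real_derivative
        p x * (m * r x - V x * q x) + (m * r x - V x * q x) * p x + (q x * (V x * p x) + V x * p x * q x)
        - (r x * (m * p x) + m * p x * r x)) (at x)"
      by (intro DERIV_add DERIV_diff DERIV_mult' dp dq dr that)
    also have "p x * (m * r x - V x * q x) + (m * r x - V x * q x) * p x + (q x * (V x * p x) + V x * p x * q x)
        - (r x * (m * p x) + m * p x * r x) = 0"
      by (simp add: algebra_simps)
    finally show ?thesis
      by (rule has_field_derivative_at_within)
  qed
  then have "\<exists>\<Delta>. \<forall>x\<in>{a<..<b}. p x * p x + q x * q x - r x * r x = \<Delta>"
    by (intro has_field_derivative_zero_constant) simp_all
  then show ?thesis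
    using that by blast
qed

lemma reduced_solution_of_lax_eigenvector:
  fixes p q r V :: "real \<Rightarrow> real" and m :: real and \<mu> :: complex
  assumes dp: "\<And>x. x \<in> J \<Longrightarrow> (p has_real_derivative m * r x - V x * q x) (at x)"
    and dq: "\<And>x. x \<in> J \<Longrightarrow> (q has_real_derivative V x * p x) (at x)"
    and dr: "\<And>x. x \<in> J \<Longrightarrow> (r has_real_derivative m * p x) (at x)"
    and nz: "\<And>x. x \<in> J \<Longrightarrow> p x + r x \<noteq> 0"
    and \<mu>: "\<And>x. x \<in> J \<Longrightarrow>
      4 * (\<mu> * \<mu>) = of_real (p x * p x + q x * q x - r x * r x)"
    and dG: "\<And>x. x \<in> J \<Longrightarrow> (G has_vector_derivative
      (of_real (V x) * (2 * \<mu> + of_real (q x)) * inverse (of_real (p x + r x)) - of_real m) / 2)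
      (at x)"
  shows "reduced_solution m V J (\<lambda>x. exp (G x) * of_real (p x + r x))
    (\<lambda>x. exp (G x) * (2 * \<mu> - of_real (q x)))"
  unfolding reduced_solution_def
proof (intro ballI conjI)
  define g where "g x = (of_real (V x) * (2 * \<mu> + of_real (q x)) * inverse (of_real (p x + r x))
    - of_real m) / 2" for x
  fix x assume x: "x \<in> J"
  let ?u1 = "\<lambda>y. exp (G y) * of_real (p y + r y)" and ?u2 = "\<lambda>y. exp (G y) * (2 * \<mu> - of_real (q y))"
  let ?M = "complex_of_real m" and ?V = "complex_of_real (V x)"
  let ?P = "complex_of_real (p x)" and ?Q = "complex_of_real (q x)" and ?R = "complex_of_real (r x)"
  have nz': "?P + ?R \<noteq> 0" "?P * 2 + ?R * 2 \<noteq> 0"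
    using nz[OF x] by (simp_all flip: of_real_add distrib_right)
  have "(?u1 has_vector_derivative
      exp (G x) * of_real (m * r x - V x * q x + m * p x) + g x * exp (G x) * of_real (p x + r x)) (at x)"
    by (intro has_vector_derivative_mult has_vector_derivative_exp has_vector_derivative_of_real
        DERIV_add dG[unfolded g_def[symmetric]] dp dr x)
  also have "exp (G x) * of_real (m * r x - V x * q x + m * p x) + g x * exp (G x) * of_real (p x + r x)
      = (?M * ?u1 x + ?V * ?u2 x) / 2"
  proof -
    have "g x * (?P + ?R) = (?V * (2 * \<mu> + ?Q) - ?M * (?P + ?R)) / 2"
      using nz' unfolding g_def by (simp add: inverse_eq_divide divide_simps)
    then have "g x * exp (G x) * (?P + ?R) = exp (G x) * ((?V * (2 * \<mu> + ?Q) - ?M * (?P + ?R)) / 2)"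
      by (simp add: ac_simps)
    then show ?thesis
      by (simp add: field_simps)
  qed
  finally show "(?u1 has_vector_derivative (?M * ?u1 x + ?V * ?u2 x) / 2) (at x)" .
  have "(?u2 has_vector_derivative
      exp (G x) * (0 - of_real (V x * p x)) + g x * exp (G x) * (2 * \<mu> - ?Q)) (at x)"
    by (intro has_vector_derivative_mult has_vector_derivative_exp has_vector_derivative_diff
        has_vector_derivative_of_real has_vector_derivative_const dG[unfolded g_def[symmetric]] dq x)
  also have "exp (G x) * (0 - of_real (V x * p x)) + g x * exp (G x) * (2 * \<mu> - ?Q)
      = - (?V * ?u1 x + ?M * ?u2 x) / 2"
  proof -
    have "g x * (2 * \<mu> - ?Q) = (?V * (?P - ?R) - ?M * (2 * \<mu> - ?Q)) / 2"
      using nz' \<mu>[OF x] unfolding g_def by (simp add: inverse_eq_divide divide_simps) algebra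
    then have "g x * exp (G x) * (2 * \<mu> - ?Q) = exp (G x) * ((?V * (?P - ?R) - ?M * (2 * \<mu> - ?Q)) / 2)"
      by (simp add: ac_simps)
    then show ?thesis
      by (simp add: field_simps)
  qed
  finally show "(?u2 has_vector_derivative - (?V * ?u1 x + ?M * ?u2 x) / 2) (at x)" .
qed

lemma quad_fundamental_matrix_of_lax_triple:
  fixes p q r :: "real \<Rightarrow> real"
  assumes "dirac_matrices \<gamma>"
    and dp: "\<And>x. x \<in> {a<..<b} \<Longrightarrow> (p has_real_derivative m * r x - V x * q x) (at x)"
    and dq: "\<And>x. x \<in> {a<..<b} \<Longrightarrow> (q has_real_derivative V x * p x) (at x)"
    and dr: "\<And>x. x \<in> {a<..<b} \<Longrightarrow> (r has_real_derivative m * p x) (at x)"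
    and nz: "\<And>x. x \<in> {a<..<b} \<Longrightarrow> p x + r x \<noteq> 0"
    and V: "continuous_on {a<..<b} V"
    and qp: "quad V {a<..<b} (\<lambda>x. of_real (p x))" and qq: "quad V {a<..<b} (\<lambda>x. of_real (q x))"
    and qr: "quad V {a<..<b} (\<lambda>x. of_real (r x))"
  shows "quad_fundamental_matrix V (dirac_coefficient \<gamma> m V) {a<..<b}"
proof -
  let ?J = "{a<..<b}"
  let ?P = "\<lambda>x. complex_of_real (p x)" and ?Q = "\<lambda>x. complex_of_real (q x)"
    and ?R = "\<lambda>x. complex_of_real (r x)"
  obtain \<Delta> where \<Delta>: "\<And>x. x \<in> ?J \<Longrightarrow> p x * p x + q x * q x - r x * r x = \<Delta>"
    using lax_triple_conserved[OF dp dq dr] by blast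
  define \<mu> where "\<mu> = csqrt (of_real \<Delta>) / 2"
  have \<mu>: "4 * (\<mu> * \<mu>) = of_real (p x * p x + q x * q x - r x * r x)" if "x \<in> ?J" for x
    unfolding \<mu>_def \<Delta>[OF that] by (simp add: field_simps flip: power2_eq_square)
  \<comment> \<open>(p, q, r) encodes the traceless matrix L = [[q, p + r], [p - r, -q]], which satisfies the Lax
    equation L' = [A, L] for the reduced system, so det L is conserved; (p + r, 2 \<mu> - q) is an
    eigenvector of L, and normalising it by exp G turns it into a solution.\<close>
  define g where "g x = (of_real (V x) * (2 * \<mu> + ?Q x) * inverse (of_real (p x + r x)) - of_real m) / 2"
    for x
  have "continuous_on ?J p" "continuous_on ?J q" "continuous_on ?J r"
    by (rule continuous_at_imp_continuous_on, use dp dq dr DERIV_isCont in blast)+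
  then have "continuous_on ?J g"
    unfolding g_def using V nz by (intro continuous_intros) (auto simp flip: of_real_add)
  then obtain G where dG: "\<And>x. x \<in> ?J \<Longrightarrow> (G has_vector_derivative g x) (at x)"
    using antiderivative_on_open_interval by blast
  have "quad V ?J (\<lambda>x. inverse (of_real (p x + r x)))"
    by (rule q_inv[OF q_cong[OF q_add[OF qp qr]]]) (use nz in \<open>simp_all flip: of_real_add\<close>)
  then have "quad V ?J g"
    unfolding g_def by (intro quad_divide_const quad_diff q_mult q_add q_V q_const qq)
  then have qG: "quad V ?J G"
    by (rule q_integral) (use dG in blast)
  show ?thesis
  proof (rule quad_fundamental_matrix_of_reduced_solution[OF assms(1)
        reduced_solution_of_lax_eigenvector[OF dp dq dr nz \<mu> dG[unfolded g_def]] _ V])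
    show "exp (G x) * of_real (p x + r x) \<noteq> 0" if "x \<in> ?J" for x
      using nz[OF that] by (simp flip: of_real_add)
    show "quad V ?J (\<lambda>x. exp (G x) * of_real (p x + r x))"
      by (rule q_cong[where f="\<lambda>x. exp (G x) * (?P x + ?R x)"]) (intro q_mult q_exp q_add qG qp qr, simp)
    show "quad V ?J (\<lambda>x. exp (G x) * (2 * \<mu> - ?Q x))"
      by (intro q_mult q_exp quad_diff q_const qG qq)
  qed
qed

lemma quad_solvable_within_of_lax_triple:
  fixes p q r :: "real \<Rightarrow> real"
  assumes "dirac_matrices \<gamma>" and V: "continuous_on {a<..<b} V"
    and dp: "\<And>x. x \<in> {a<..<b} \<Longrightarrow> (p has_real_derivative m * r x - V x * q x) (at x)"
    and dq: "\<And>x. x \<in> {a<..<b} \<Longrightarrow> (q has_real_derivative V x * p x) (at x)"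
    and dr: "\<And>x. x \<in> {a<..<b} \<Longrightarrow> (r has_real_derivative m * p x) (at x)"
    and qp: "\<And>K. quad V K (\<lambda>x. of_real (p x))" and qq: "\<And>K. quad V K (\<lambda>x. of_real (q x))"
    and qr: "\<And>K. quad V K (\<lambda>x. of_real (r x))"
    and x0: "x0 \<in> {a<..<b}" "p x0 + r x0 \<noteq> 0"
  shows "quad_solvable_within V (dirac_coefficient \<gamma> m V) a b"
proof -
  have "continuous_on {a<..<b} p" "continuous_on {a<..<b} r"
    by (rule continuous_at_imp_continuous_on, use dp dr DERIV_isCont in blast)+
  then obtain c d where cd: "a \<le> c" "c < d" "d \<le> b" and nz: "\<forall>x\<in>{c<..<d}. p x + r x \<noteq> 0"
    using continuous_nonzero_subinterval[of a b "\<lambda>x. p x + r x"] continuous_on_add x0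
    by blast
  have sub: "{c<..<d} \<subseteq> {a<..<b}"
    using cd by auto
  have "quad_fundamental_matrix V (dirac_coefficient \<gamma> m V) {c<..<d}"
    using nz sub by (intro quad_fundamental_matrix_of_lax_triple[OF assms(1), where p=p and q=q and r=r]
        dp dq dr qp qq qr continuous_on_subset[OF V sub]) auto
  then show ?thesis
    using quad_solvable_withinI[OF cd(2)] quad_solvable_within_subinterval[OF cd(1,3)] by blast
qed

lemma lax_triple_degenerate:
  fixes p q r V :: "real \<Rightarrow> real"
  assumes V: "continuous_on {a<..<b} V"
    and dp: "\<And>x. x \<in> {a<..<b} \<Longrightarrow> (p has_real_derivative m * r x - V x * q x) (at x)"
    and dq: "\<And>x. x \<in> {a<..<b} \<Longrightarrow> (q has_real_derivative V x * p x) (at x)"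
    and dr: "\<And>x. x \<in> {a<..<b} \<Longrightarrow> (r has_real_derivative m * p x) (at x)"
    and pr: "\<And>x. x \<in> {a<..<b} \<Longrightarrow> p x + r x = 0"
  shows "(\<forall>x\<in>{a<..<b}. V x = 0) \<or>
    (\<exists>c d. a \<le> c \<and> c < d \<and> d \<le> b \<and> (\<forall>x\<in>{c<..<d}. p x = 0))"
proof -
  \<comment> \<open>(p + r)' = m (p + r) - V q vanishes, so V q = 0; where V \<noteq> 0 this gives q = 0 and
    then p = q' / V = 0.\<close>
  have Vq: "V x * q x = 0" if "x \<in> {a<..<b}" for x
  proof -
    have "((\<lambda>x. p x + r x) has_real_derivative m * r x - V x * q x + m * p x) (at x)"
      using dp dr that by (intro DERIV_add)
    then have "m * r x - V x * q x + m * p x = 0"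
      by (rule has_real_derivative_vanishing[where S="{a<..<b}"]) (use pr that in auto)
    then have "V x * q x = m * (p x + r x)"
      by (simp add: algebra_simps)
    then show ?thesis
      using pr[OF that] by simp
  qed
  show ?thesis
  proof (cases "\<exists>x1\<in>{a<..<b}. V x1 \<noteq> 0")
    case True
    then obtain c d where cd: "a \<le> c" "c < d" "d \<le> b" and V: "\<forall>x\<in>{c<..<d}. V x \<noteq> 0"
      using continuous_nonzero_subinterval[OF V] by blast
    have q0: "q y = 0" if "y \<in> {c<..<d}" for y
    proof -
      have "V y * q y = 0"
        using that cd by (intro Vq) auto
      then show ?thesis
        using V that by simp
    qed
    have "p x = 0" if "x \<in> {c<..<d}" for x
    proof -
      have "(q has_real_derivative V x * p x) (at x)"
        using that cd by (intro dq) auto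
      then have "V x * p x = 0"
        using has_real_derivative_vanishing open_greaterThanLessThan that q0 by blast
      then show ?thesis
        using V that by simp
    qed
    then show ?thesis
      using cd by blast
  qed simp
qed

section \<open>The mKdV hierarchy\<close>

text \<open>The coefficients of the quotient of \<open>C\<^sub>0 + C\<^sub>1 X + \<dots> + C\<^sub>N X\<^sup>N\<close> by \<open>X - t\<close>; the
  remainder is \<open>C 0 + t * quotient_coeffs C N t 0\<close>.\<close>

definition quotient_coeffs :: "(nat \<Rightarrow> real) \<Rightarrow> nat \<Rightarrow> real \<Rightarrow> nat \<Rightarrow> real" where
  "quotient_coeffs C N t j = (\<Sum>k\<in>{Suc j..N}. C k * t ^ (k - Suc j))"

lemma quotient_coeffs_rec:
  assumes "j < N"
  shows "quotient_coeffs C N t j = C (Suc j) + t * quotient_coeffs C N t (Suc j)"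
proof -
  have "quotient_coeffs C N t j = C (Suc j) + (\<Sum>k\<in>{Suc (Suc j)..N}. C k * t ^ (k - Suc j))"
    unfolding quotient_coeffs_def using assms by (subst sum.atLeast_Suc_atMost) auto
  also have "(\<Sum>k\<in>{Suc (Suc j)..N}. C k * t ^ (k - Suc j)) = t * quotient_coeffs C N t (Suc j)"
    unfolding quotient_coeffs_def sum_distrib_left
  proof (rule sum.cong)
    fix k assume "k \<in> {Suc (Suc j)..N}"
    then have "k - Suc j = Suc (k - Suc (Suc j))" by auto
    then show "C k * t ^ (k - Suc j) = t * (C k * t ^ (k - Suc (Suc j)))" by simp
  qed simp
  finally show ?thesis .
qed

lemma sum_quotient_coeffs_shift:
  fixes C s :: "nat \<Rightarrow> real" and N :: nat and t :: real
  defines "D \<equiv> quotient_coeffs C (Suc N) t"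
  shows "(\<Sum>j\<le>N. D j * s (Suc j)) + (C 0 + t * D 0) * s 0
    = t * (\<Sum>j\<le>N. D j * s j) + (\<Sum>k\<le>Suc N. C k * s k)"
proof -
  have "(\<Sum>j\<le>N. D j * s (Suc j)) = (\<Sum>j\<le>N. C (Suc j) * s (Suc j)) + t * (\<Sum>j\<le>N. D (Suc j) * s (Suc j))"
    unfolding D_def
    by (simp add: quotient_coeffs_rec sum.distrib sum_distrib_left algebra_simps le_imp_less_Suc)
  also have "(\<Sum>j\<le>N. D (Suc j) * s (Suc j)) = (\<Sum>j\<le>N. D j * s j) - D 0 * s 0"
    using sum.atMost_Suc_shift[of "\<lambda>j. D j * s j" N] by (simp add: D_def quotient_coeffs_def)
  also have "(\<Sum>j\<le>N. C (Suc j) * s (Suc j)) = (\<Sum>k\<le>Suc N. C k * s k) - C 0 * s 0"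
    using sum.atMost_Suc_shift[of "\<lambda>j. C j * s j" N] by simp
  finally show ?thesis
    by (simp add: algebra_simps)
qed

locale mkdv_hierarchy =
  fixes V :: "real \<Rightarrow> real" and S W :: "nat \<Rightarrow> real \<Rightarrow> real"
  assumes smooth_V: "smooth V"
    and S_0: "S 0 = deriv V"
    and W_deriv: "\<And>k x. (W k has_real_derivative V x * S k x) (at x)"
    and S_Suc: "\<And>k x. S (Suc k) x = deriv (deriv (S k)) x + (V x)\<^sup>2 * S k x + deriv V x * W k x"

lemma mkdv_symmetries_imp_hierarchy:
  assumes "mkdv_symmetries V S" "smooth V"
  obtains W where "mkdv_hierarchy V S W"
proof -
  have "\<forall>k. \<exists>W. (\<forall>x. (W has_real_derivative V x * S k x) (at x)) \<and>
      S (Suc k) = (\<lambda>x. deriv (deriv (S k)) x + (V x)\<^sup>2 * S k x + deriv V x * W x)"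
    using assms(1) unfolding mkdv_symmetries_def by blast
  then obtain W where "\<And>k x. (W k has_real_derivative V x * S k x) (at x)"
    and "\<And>k. S (Suc k) = (\<lambda>x. deriv (deriv (S k)) x + (V x)\<^sup>2 * S k x + deriv V x * W k x)"
    by metis
  then have "mkdv_hierarchy V S W"
    using assms unfolding mkdv_hierarchy_def mkdv_symmetries_def by simp
  then show ?thesis ..
qed

context mkdv_hierarchy
begin

lemma smooth_W_if_smooth_S: "smooth (S k) \<Longrightarrow> smooth (W k)"
  by (rule smooth_antiderivative[OF W_deriv smooth_mult[OF smooth_V]])

lemma smooth_S: "smooth (S k)"
proof (induction k)
  case 0
  show ?case
    by (simp add: S_0 smooth_deriv smooth_V)
next
  case (Suc k)
  have "S (Suc k) = (\<lambda>x. deriv (deriv (S k)) x + (V x * V x) * S k x + deriv V x * W k x)"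
    by (simp add: fun_eq_iff S_Suc power2_eq_square)
  then show ?case
    using Suc smooth_V smooth_W_if_smooth_S
    by (simp add: smooth_add smooth_mult smooth_deriv)
qed

lemma differentiable_S: "S k differentiable (at x)"
  and differentiable_deriv_S: "deriv (S k) differentiable (at x)"
  and differentiable_V: "V differentiable (at x)"
  using smooth_S smooth_V by (blast intro: smooth_differentiable smooth_deriv)+

lemma W_has_vector_derivative:
  "((\<lambda>x. complex_of_real (W k x)) has_vector_derivative of_real (V x) * of_real (S k x)) (at x)"
  using has_vector_derivative_of_real[OF W_deriv[of k x]] by simp

lemma quad_S: "quad V J (\<lambda>x. of_real (S k x))"
  and quad_W: "quad V J (\<lambda>x. of_real (W k x))"
proof -
  have qW: "quad V J (\<lambda>x. of_real (W k x))" if "quad V J (\<lambda>x. of_real (S k x))" for k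
    by (rule q_integral[OF q_mult[OF q_V that]]) (simp add: W_has_vector_derivative)
  have qdV: "quad V J (\<lambda>x. of_real (deriv V x))"
    by (rule quad_of_real_deriv[OF q_V differentiable_V])
  show qS: "quad V J (\<lambda>x. of_real (S k x))"
  proof (induction k)
    case 0
    show ?case unfolding S_0 by (rule qdV)
  next
    case (Suc k)
    have "quad V J (\<lambda>x. of_real (deriv (deriv (S k)) x) + of_real (V x) * of_real (V x) * of_real (S k x)
        + of_real (deriv V x) * of_real (W k x))"
      by (intro q_add q_mult quad_of_real_deriv Suc q_V qdV qW differentiable_S differentiable_deriv_S)
    then show ?case
      by (rule q_cong) (simp add: S_Suc power2_eq_square)
  qed
  then show "quad V J (\<lambda>x. of_real (W k x))"
    by (rule qW)
qed

lemma continuous_V: "continuous_on J V"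
  by (intro continuous_at_imp_continuous_on ballI differentiable_imp_continuous_within
      differentiable_V)

text \<open>The division \<open>C(X) = (X - t) Q(X) + C(t)\<close>, evaluated at the recursion operator on \<open>V'\<close>.\<close>

lemma recursion_quotient_identity:
  fixes C :: "nat \<Rightarrow> real" and N :: nat and t :: real
  defines "D \<equiv> quotient_coeffs C (Suc N) t"
  assumes "(\<Sum>k\<le>Suc N. C k * S k x) = 0"
  shows "(\<Sum>j\<le>N. D j * deriv (deriv (S j)) x) + (V x)\<^sup>2 * (\<Sum>j\<le>N. D j * S j x)
      + deriv V x * ((\<Sum>j\<le>N. D j * W j x) + (C 0 + t * D 0)) = t * (\<Sum>j\<le>N. D j * S j x)"
proof -
  have "(\<Sum>j\<le>N. D j * S (Suc j) x) = (\<Sum>j\<le>N. D j * deriv (deriv (S j)) x)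
      + (V x)\<^sup>2 * (\<Sum>j\<le>N. D j * S j x) + deriv V x * (\<Sum>j\<le>N. D j * W j x)"
    by (simp add: S_Suc sum.distrib sum_distrib_left algebra_simps)
  moreover have "(\<Sum>j\<le>N. D j * S (Suc j) x) + (C 0 + t * D 0) * S 0 x = t * (\<Sum>j\<le>N. D j * S j x)"
    using sum_quotient_coeffs_shift[where C=C and s="\<lambda>k. S k x" and N=N and t=t] assms(2)
    by (simp add: D_def)
  ultimately show ?thesis
    by (simp add: S_0 algebra_simps)
qed

lemma lax_triple_of_relation:
  assumes "m \<noteq> 0" and rel: "\<And>x. x \<in> J \<Longrightarrow> (\<Sum>k\<le>Suc N. C k * S k x) = 0"
    and p_eq: "p = (\<lambda>x. \<Sum>j\<le>N. quotient_coeffs C (Suc N) (m * m) j * S j x)"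
  obtains q r where "\<And>x. (q has_real_derivative V x * p x) (at x)"
    and "\<And>x. (p has_real_derivative m * r x - V x * q x) (at x)"
    and "\<And>x. x \<in> J \<Longrightarrow> (r has_real_derivative m * p x) (at x)"
    and "\<And>K. quad V K (\<lambda>x. of_real (q x))" and "\<And>K. quad V K (\<lambda>x. of_real (r x))"
proof -
  \<comment> \<open>The constant of integration in q is the remainder C(m^2) of the division of C by X - m^2.\<close>
  define D where "D = quotient_coeffs C (Suc N) (m * m)"
  have p: "p x = (\<Sum>j\<le>N. D j * S j x)" for x
    by (simp add: p_eq D_def)
  define p' where "p' x = (\<Sum>j\<le>N. D j * deriv (S j) x)" for x
  define p'' where "p'' x = (\<Sum>j\<le>N. D j * deriv (deriv (S j)) x)" for x
  define q where "q x = (\<Sum>j\<le>N. D j * W j x) + (C 0 + m * m * D 0)" for x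
  define r where "r x = (p' x + V x * q x) / m" for x
  have dp: "(p has_real_derivative p' x) (at x)" for x
    unfolding p[abs_def] p'_def
    by (intro DERIV_sum DERIV_cmult DERIV_deriv_iff_real_differentiable[THEN iffD2] differentiable_S)
  have dp': "(p' has_real_derivative p'' x) (at x)" for x
    unfolding p'_def p''_def
    by (intro DERIV_sum DERIV_cmult DERIV_deriv_iff_real_differentiable[THEN iffD2]
        differentiable_deriv_S)
  have dq: "(q has_real_derivative V x * p x) (at x)" for x
  proof -
    have "(q has_real_derivative (\<Sum>j\<le>N. D j * (V x * S j x)) + 0) (at x)"
      unfolding q_def by (intro DERIV_add DERIV_sum DERIV_cmult W_deriv DERIV_const)
    then show ?thesis
      by (simp add: p sum_distrib_left mult_ac)
  qed
  have key: "p'' x + (V x)\<^sup>2 * p x + deriv V x * q x = m * m * p x" if "x \<in> J" for x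
    using recursion_quotient_identity[OF rel[OF that]] by (simp add: p p''_def q_def D_def)
  show ?thesis
  proof (rule that)
    show "(q has_real_derivative V x * p x) (at x)" for x
      by (rule dq)
    show "(p has_real_derivative m * r x - V x * q x) (at x)" for x
      using dp[of x] \<open>m \<noteq> 0\<close> by (simp add: r_def)
    show "(r has_real_derivative m * p x) (at x)" if "x \<in> J" for x
    proof -
      have "(r has_real_derivative (p'' x + (V x * (V x * p x) + deriv V x * q x)) / m) (at x)"
        unfolding r_def[abs_def]
        by (intro DERIV_cdivide DERIV_add dp' DERIV_mult' dq
            DERIV_deriv_iff_real_differentiable[THEN iffD2] differentiable_V)
      then show ?thesis
        using key[OF that] \<open>m \<noteq> 0\<close> by (simp add: power2_eq_square algebra_simps)
    qed
    have qq: "quad V K (\<lambda>x. of_real (q x))" for K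
      unfolding q_def of_real_add
      by (intro q_add q_const quad_of_real_weighted_sum quad_W)
    then show "quad V K (\<lambda>x. of_real (q x))" for K .
    have "quad V K (\<lambda>x. of_real (p' x))" for K
      unfolding p'_def
      by (intro quad_of_real_weighted_sum quad_of_real_deriv[OF quad_S] differentiable_S)
    then show "quad V K (\<lambda>x. of_real (r x))" for K
      unfolding r_def of_real_divide of_real_add of_real_mult
      by (intro quad_divide_const q_add q_mult q_V qq)
  qed
qed

lemma solvable_or_lower_relation:
  assumes "dirac_matrices \<gamma>" "m \<noteq> 0" "a < b"
    and rel: "\<And>x. x \<in> {a<..<b} \<Longrightarrow> (\<Sum>k\<le>Suc N. C k * S k x) = 0"
  shows "quad_solvable_within V (dirac_coefficient \<gamma> m V) a b \<or>
    (\<exists>c d. a \<le> c \<and> c < d \<and> d \<le> b \<and>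
      (\<forall>x\<in>{c<..<d}. (\<Sum>j\<le>N. quotient_coeffs C (Suc N) (m * m) j * S j x) = 0))"
proof -
  define p where "p = (\<lambda>x. \<Sum>j\<le>N. quotient_coeffs C (Suc N) (m * m) j * S j x)"
  have qp: "quad V K (\<lambda>x. of_real (p x))" for K
    unfolding p_def by (intro quad_of_real_weighted_sum quad_S)
  show ?thesis
  proof (rule lax_triple_of_relation[OF assms(2) rel p_def])
    fix q r
    assume dq: "\<And>x. (q has_real_derivative V x * p x) (at x)"
      and dp: "\<And>x. (p has_real_derivative m * r x - V x * q x) (at x)"
      and dr: "\<And>x. x \<in> {a<..<b} \<Longrightarrow> (r has_real_derivative m * p x) (at x)"
      and qq: "\<And>K. quad V K (\<lambda>x. of_real (q x))" and qr: "\<And>K. quad V K (\<lambda>x. of_real (r x))"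
    show ?thesis
    proof (cases "\<exists>x0\<in>{a<..<b}. p x0 + r x0 \<noteq> 0")
      case True
      then show ?thesis
        using quad_solvable_within_of_lax_triple[OF assms(1) continuous_V dp dq dr qp qq qr] by blast
    next
      case False
      then have pr: "p x + r x = 0" if "x \<in> {a<..<b}" for x
        using that by auto
      have "(\<forall>x\<in>{a<..<b}. V x = 0) \<or>
          (\<exists>c d. a \<le> c \<and> c < d \<and> d \<le> b \<and> (\<forall>x\<in>{c<..<d}. p x = 0))"
        by (rule lax_triple_degenerate[OF continuous_V dp dq dr pr])
      then show ?thesis
      proof
        assume "\<forall>x\<in>{a<..<b}. V x = 0"
        then have "quad_fundamental_matrix V (dirac_coefficient \<gamma> m V) {a<..<b}"
          by (intro quad_fundamental_matrix_constant_potential[OF assms(1), where v=0]) auto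
        then show ?thesis
          using quad_solvable_withinI[OF assms(3)] by blast
      qed (simp add: p_def)
    qed
  qed
qed

lemma quad_solvable_within_if_relation:
  assumes "dirac_matrices \<gamma>" "m \<noteq> 0"
  shows "\<exists>k\<le>N. C k \<noteq> 0 \<Longrightarrow> a < b \<Longrightarrow> \<forall>x\<in>{a<..<b}. (\<Sum>k\<le>N. C k * S k x) = 0 \<Longrightarrow>
    quad_solvable_within V (dirac_coefficient \<gamma> m V) a b"
proof (induction N arbitrary: C a b)
  case 0
  \<comment> \<open>A relation of order zero says V' = 0, so V is constant.\<close>
  have "(V has_real_derivative 0) (at x within {a<..<b})" if "x \<in> {a<..<b}" for x
  proof -
    have "(V has_real_derivative deriv V x) (at x)"
      by (simp add: DERIV_deriv_iff_real_differentiable differentiable_V)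
    moreover have "deriv V x = 0"
      using 0 that by (simp add: S_0)
    ultimately show ?thesis
      by (simp add: has_field_derivative_at_within)
  qed
  then obtain v where "\<forall>x\<in>{a<..<b}. V x = v"
    using has_field_derivative_zero_constant[of "{a<..<b}" V] by auto
  then show ?case
    using quad_fundamental_matrix_constant_potential[OF assms(1)] quad_solvable_withinI[OF \<open>a < b\<close>]
    by blast
next
  case (Suc N)
  show ?case
  proof (cases "C (Suc N) = 0")
    case True
    have "\<exists>k\<le>N. C k \<noteq> 0"
      using Suc.prems(1) True le_Suc_eq by auto
    moreover have "\<forall>x\<in>{a<..<b}. (\<Sum>k\<le>N. C k * S k x) = 0"
      using Suc.prems(3) True by simp
    ultimately show ?thesis
      using Suc.IH Suc.prems(2) by blast
  next
    case False
    let ?D = "quotient_coeffs C (Suc N) (m * m)"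
    have "?D N \<noteq> 0"
      using False by (simp add: quotient_coeffs_def)
    then show ?thesis
      using solvable_or_lower_relation[OF assms \<open>a < b\<close>] Suc.prems(3) Suc.IH[of ?D]
        quad_solvable_within_subinterval by blast
  qed
qed

end

theorem theorem1:
  fixes \<gamma> :: "nat \<Rightarrow> complex^4^4" and m :: real and V :: "real \<Rightarrow> real"
    and N :: nat and C :: "nat \<Rightarrow> real"
  assumes "dirac_matrices \<gamma>"
    and "\<forall>k x. (deriv ^^ k) V differentiable (at x)"
    and "\<exists>k\<le>N. C k \<noteq> 0"
    and "\<exists>S. mkdv_symmetries V S \<and> (\<forall>x. (\<Sum>k\<le>N. C k * S k x) = 0)"
  shows "integrable_by_quadratures V (\<lambda>x. V x *\<^sub>R J3 \<gamma> + m *\<^sub>R J2 \<gamma>)"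
proof -
  obtain S where S: "mkdv_symmetries V S" and rel: "\<forall>x. (\<Sum>k\<le>N. C k * S k x) = 0"
    using assms(4) by blast
  obtain W where hierarchy: "mkdv_hierarchy V S W"
    using mkdv_symmetries_imp_hierarchy[OF S smooth_if_deriv_funpow_differentiable[OF assms(2)]] .
  have "quad_solvable_within V (dirac_coefficient \<gamma> m V) a b" if "a < b" for a b
  proof (cases "m = 0")
    case True
    then show ?thesis
      using quad_fundamental_matrix_massless[OF assms(1) mkdv_hierarchy.continuous_V[OF hierarchy]]
        quad_solvable_withinI[OF that] by simp
  next
    case False
    then show ?thesis
      using mkdv_hierarchy.quad_solvable_within_if_relation[OF hierarchy assms(1) False assms(3) that] rel
      by simp
  qed
  moreover have "(\<lambda>x. V x *\<^sub>R J3 \<gamma> + m *\<^sub>R J2 \<gamma>) = dirac_coefficient \<gamma> m V"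
    by (simp add: fun_eq_iff dirac_coefficient_def)
  ultimately show ?thesis
    by (simp add: integrable_by_quadratures_iff_solvable_within)
qed

end
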